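(* Let $N\ge1$ be odd, let $A=A(h)$ be the $(N+2)\times(N+2)$ matrix defined in the context and $C=e_2^T=(0,1,0,\dots,0)$. Then for every real value of the parameters $h_\alpha,h_\beta,h_1,\dots,h_{N-1}$ the pair $(A,C)$ is unobservable, i.e. the observability matrix $(C^T,\ (CA)^T,\ \dots,\ (CA^{N+1})^T)^T$ has rank strictly less than $N+2$.
   Context: For an integer $N\ge1$ and real parameters $h=(h_\alpha,h_\beta,h_1,\dots,h_{N-1})$, set $(c_1,c_2,c_3,\dots,c_{N+1})=(h_\alpha,h_\beta,h_1,\dots,h_{N-1})$ and let $A(h)$ be the real $(N+2)\times(N+2)$ tridiagonal matrix with $A_{j,j+1}=c_j$, $A_{j+1,j}=-c_j$ for $j=1,\dots,N+1$ and all other entries zero. $e_j$ denotes the $j$-th standard basis column vector. *)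

theory Defs
  imports "Jordan_Normal_Form.DL_Rank"
begin

text \<open>Indices are 0-based: row/column j (0-based) corresponds to the paper's j+1.
  The coefficient sequence (c_1,...,c_{N+1}) = (h_alpha, h_beta, h_1, ..., h_{N-1})
  is represented 0-based as coef.\<close>

definition coef :: "real \<Rightarrow> real \<Rightarrow> (nat \<Rightarrow> real) \<Rightarrow> nat \<Rightarrow> real" where
  "coef ha hb h j = (if j = 0 then ha else if j = 1 then hb else h (j - 1))"

definition Amat :: "nat \<Rightarrow> real \<Rightarrow> real \<Rightarrow> (nat \<Rightarrow> real) \<Rightarrow> real mat" where
  "Amat N ha hb h = mat (N+2) (N+2) (\<lambda>(i,j).
      if j = i + 1 then coef ha hb h i
      else if i = j + 1 then - coef ha hb h j
      else 0)"

definition Cmat :: "nat \<Rightarrow> real mat" where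
  "Cmat N = mat 1 (N+2) (\<lambda>(i,j). if j = 1 then 1 else 0)"

definition obs_mat :: "real mat \<Rightarrow> real mat \<Rightarrow> nat \<Rightarrow> real mat" where
  "obs_mat A C n = mat n (dim_col A) (\<lambda>(k,j). (C * (A ^\<^sub>m k)) $$ (0, j))"

end

theory Submission
  imports Defs
begin

text \<open>Number the coordinates 0, ..., n-1 and call a matrix A bipartite if A(i,j) = 0 whenever
  i + j is even, i.e. A only couples even to odd coordinates; the tridiagonal A(h) is of this
  kind, and C = e_2^T is supported on the odd coordinates. By induction, the row C A^k is then
  supported on the coordinates of parity opposite to k. Hence every even row of the observability
  matrix lies in the span of the m unit vectors e_j with j odd, and every odd row C A^k =
  (C A^(k-1)) A lies in the span of the m rows A(j,-) with j odd. For n = N + 2 = 2m + 1 all n rows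
  lie in a span of 2m < n vectors; concretely the observability matrix factors as U B with a zero
  column in U, so its determinant vanishes.\<close>

lemma det_eq_0_if_zero_col:
  fixes U :: "'a :: field mat"
  assumes U: "U \<in> carrier_mat n n" and i: "i < n" and zero: "\<And>k. k < n \<Longrightarrow> U $$ (k, i) = 0"
  shows "det U = 0"
proof -
  have "U *\<^sub>v unit_vec n i = 0\<^sub>v n"
    using U i zero by (intro eq_vecI) (auto simp: row_def)
  then show ?thesis
    using i by (auto simp: det_0_iff_vec_prod_zero_field[OF U] intro!: exI[of _ "unit_vec n i"])
qed

lemma mult_pow_mat_Suc_index:
  assumes A: "A \<in> carrier_mat n n" and C: "C \<in> carrier_mat 1 n" and j: "j < n"
  shows "(C * A ^\<^sub>m Suc k) $$ (0, j) = (\<Sum>l<n. (C * A ^\<^sub>m k) $$ (0, l) * A $$ (l, j))"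
proof -
  have Ak: "A ^\<^sub>m k \<in> carrier_mat n n" using A by (rule pow_carrier_mat)
  have CAk: "C * A ^\<^sub>m k \<in> carrier_mat 1 n" using C Ak by simp
  have "C * A ^\<^sub>m Suc k = C * A ^\<^sub>m k * A"
    using assoc_mult_mat[OF C Ak A] by simp
  also have "\<dots> $$ (0, j) = row (C * A ^\<^sub>m k) 0 \<bullet> col A j"
    using CAk A j by (intro index_mult_mat) auto
  also have "\<dots> = (\<Sum>l<n. (C * A ^\<^sub>m k) $$ (0, l) * A $$ (l, j))"
    unfolding scalar_prod_def lessThan_atLeast0
    using CAk A j by (intro sum.cong) auto
  finally show ?thesis .
qed

lemma mult_pow_mat_index_eq_0_if_bipartite:
  assumes A: "A \<in> carrier_mat n n" and C: "C \<in> carrier_mat 1 n"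
    and A_bip: "\<And>i j. i < n \<Longrightarrow> j < n \<Longrightarrow> even (i + j) \<Longrightarrow> A $$ (i, j) = 0"
    and C_odd: "\<And>j. j < n \<Longrightarrow> even j \<Longrightarrow> C $$ (0, j) = 0"
    and "j < n" and "even (k + j)"
  shows "(C * A ^\<^sub>m k) $$ (0, j) = 0"
  using assms(5,6)
proof (induction k arbitrary: j)
  case 0
  then show ?case using A C C_odd by (simp add: right_mult_one_mat)
next
  case (Suc k)
  have "(C * A ^\<^sub>m k) $$ (0, l) * A $$ (l, j) = 0" if "l < n" for l
    using Suc that A_bip[of l j] by (cases "even (k + l)") auto
  then show ?case
    unfolding mult_pow_mat_Suc_index[OF A C Suc.prems(1)] by simp
qed

theorem obs_mat_rank_lt_if_bipartite:
  fixes A C :: "real mat"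
  assumes A: "A \<in> carrier_mat n n" and C: "C \<in> carrier_mat 1 n" and "odd n"
    and A_bip: "\<And>i j. i < n \<Longrightarrow> j < n \<Longrightarrow> even (i + j) \<Longrightarrow> A $$ (i, j) = 0"
    and C_odd: "\<And>j. j < n \<Longrightarrow> even j \<Longrightarrow> C $$ (0, j) = 0"
  shows "vec_space.rank n (obs_mat A C n) < n"
proof -
  define r where "r k j = (C * A ^\<^sub>m k) $$ (0, j)" for k j
  have r_Suc: "r (Suc k) j = (\<Sum>l<n. r k l * A $$ (l, j))" if "j < n" for k j
    unfolding r_def using mult_pow_mat_Suc_index[OF A C that] .
  have r_eq_0: "r k j = 0" if "j < n" "even (k + j)" for k j
    unfolding r_def using mult_pow_mat_index_eq_0_if_bipartite[OF A C A_bip C_odd that] .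
  \<comment> \<open>Column 0 of U vanishes by parity (for odd k, 0 - 1 = 0 in nat), so row 0 of B is irrelevant.\<close>
  define B where "B = mat n n (\<lambda>(i, j). if odd i then (if i = j then 1 else 0) else A $$ (i - 1, j))"
  define U where "U = mat n n (\<lambda>(k, i). if even k then r k i else r (k - 1) (i - 1))"
  have U: "U \<in> carrier_mat n n" and B: "B \<in> carrier_mat n n"
    by (auto simp: U_def B_def)
  have obs_eq: "obs_mat A C n = U * B"
  proof (rule eq_matI)
    fix k j assume "k < dim_row (U * B)" "j < dim_col (U * B)"
    then have k: "k < n" and j: "j < n" by (auto simp: U_def B_def)
    have UB: "(U * B) $$ (k, j) = (\<Sum>i<n. U $$ (k, i) * B $$ (i, j))"
      using k j by (simp add: U_def B_def scalar_prod_def lessThan_atLeast0)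
    show "obs_mat A C n $$ (k, j) = (U * B) $$ (k, j)"
    proof (cases "even k")
      case True
      have "(\<Sum>i<n. U $$ (k, i) * B $$ (i, j)) = (\<Sum>i<n. if i = j then r k j else 0)"
        using k j True by (intro sum.cong) (auto simp: U_def B_def r_eq_0)
      then show ?thesis
        using UB k j A by (simp add: obs_mat_def r_def)
    next
      case False
      define f where "f l = r (k - 1) l * A $$ (l, j)" for l
      obtain n' where n': "n = Suc n'" and "even n'"
        using \<open>odd n\<close> by (cases n) auto
      have f_0: "f l = 0" if "l < n" "even l" for l
        using False that by (simp add: f_def r_eq_0)
      have "(\<Sum>i<n. U $$ (k, i) * B $$ (i, j)) = (\<Sum>i<Suc n'. f (i - 1))"
        unfolding n'[symmetric]
        using k j False by (intro sum.cong) (auto simp: U_def B_def f_def r_eq_0)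
      also have "\<dots> = f 0 + (\<Sum>l<n'. f l)"
        unfolding sum.lessThan_Suc_shift by simp
      also have "\<dots> = (\<Sum>l<n'. f l) + f n'"
        using f_0[of 0] f_0[of n'] n' \<open>even n'\<close> by simp
      also have "\<dots> = (\<Sum>l<n. f l)"
        unfolding n' by simp
      also have "\<dots> = r k j"
        using False j r_Suc[of j "k - 1"] by (cases k) (auto simp: f_def)
      finally show ?thesis
        using UB k j A by (simp add: obs_mat_def r_def)
    qed
  qed (use A in \<open>auto simp: obs_mat_def U_def B_def\<close>)
  have "det U = 0"
    using \<open>odd n\<close> by (intro det_eq_0_if_zero_col[OF U, of 0]) (auto simp: U_def r_eq_0 odd_pos)
  then have "det (U * B) = 0"
    by (simp add: det_mult[OF U B])
  then show ?thesis
    unfolding obs_eq using U B by (intro vec_space.det_zero_low_rank) auto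
qed

theorem lemma3:
  fixes N :: nat and ha hb :: real and h :: "nat \<Rightarrow> real"
  assumes "N \<ge> 1" and "odd N"
  shows "vec_space.rank (N+2) (obs_mat (Amat N ha hb h) (Cmat N) (N+2)) < N+2"
proof (rule obs_mat_rank_lt_if_bipartite)
  show "Amat N ha hb h \<in> carrier_mat (N+2) (N+2)" by (simp add: Amat_def)
  show "Cmat N \<in> carrier_mat 1 (N+2)" by (simp add: Cmat_def)
  show "odd (N+2)" using \<open>odd N\<close> by simp
  show "Amat N ha hb h $$ (i, j) = 0" if "i < N+2" "j < N+2" "even (i + j)" for i j
    using that by (auto simp: Amat_def)
  show "Cmat N $$ (0, j) = 0" if "j < N+2" "even j" for j
    using that by (auto simp: Cmat_def)
qed

end
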